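(* Let $(K,L)$ and $(K',L')$ be pairs consisting of a finite simplicial set and a simplicial subset, and let $r,s\geq 0$. Let $\mu^{K,K'}:\mathbb{Z}^{\mathrm{sd}^rK}\otimes\mathbb{Z}^{\mathrm{sd}^sK'}\to\mathbb{Z}^{\mathrm{sd}^{r+s}(K\times K')}$ be the ring homomorphism \[\mu^{K,K'}=\mathbf{m}\circ\big((\mathrm{pr}_1)^*\otimes(\mathrm{pr}_2)^*\big)\circ\big((\gamma^s_{\mathrm{sd}^rK})^*\otimes(\gamma^r_{\mathrm{sd}^sK'})^*\big),\] where $(\gamma^s_{\mathrm{sd}^r K})^*:\mathbb{Z}^{\mathrm{sd}^rK}\to\mathbb{Z}^{\mathrm{sd}^{r+s}K}$ and $(\gamma^r_{\mathrm{sd}^sK'})^*:\mathbb{Z}^{\mathrm{sd}^sK'}\to\mathbb{Z}^{\mathrm{sd}^{r+s}K'}$ are induced by the iterated last vertex maps, $\mathrm{pr}_1,\mathrm{pr}_2$ are the projections $\mathrm{sd}^{r+s}(K\times K')\to\mathrm{sd}^{r+s}K$, $\mathrm{sd}^{r+s}K'$ (i.e. $\mathrm{sd}^{r+s}$ applied to the projections of $K\times K'$), and $\mathbf{m}$ is the multiplication of the commutative ring $\mathbb{Z}^{\mathrm{sd}^{r+s}(K\times K')}$. Regard $\mathbb{Z}^{(K,L)}_r\otimes\mathbb{Z}^{(K',L')}_s$ as a subring of $\mathbb{Z}^{\mathrm{sd}^rK}\otimes\mathbb{Z}^{\mathrm{sd}^sK'}$. Then $\mu^{K,K'}$ maps $\mathbb{Z}^{(K,L)}_r\otimes\mathbb{Z}^{(K',L')}_s$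 into $\mathbb{Z}^{(K\times K',(K\times L')\cup(L\times K'))}_{r+s}$, hence restricts to a ring homomorphism \[\mu^{(K,L),(K',L')}:\mathbb{Z}^{(K,L)}_r\otimes\mathbb{Z}^{(K',L')}_s\to\mathbb{Z}^{(K\times K',(K\times L')\cup(L\times K'))}_{r+s},\] and this homomorphism is natural in both pairs with respect to morphisms of pairs (maps of simplicial sets $f:K_1\to K$ with $f(L_1)\subseteq L$).
   Context: $\mathbb{Z}^\Delta$ is the simplicial commutative ring $[p]\mapsto \mathbb{Z}[t_0,\dots,t_p]/\langle 1-\sum t_i\rangle$ (an order preserving $\varphi:[p]\to[q]$ acts by $t_i\mapsto\sum_{\varphi(j)=i}t_j$); for a simplicial set $X$, $\mathbb{Z}^X:=\mathrm{Hom}_{\mathbb{S}}(X,\mathbb{Z}^\Delta)$ with pointwise operations, a commutative ring, contravariant in $X$. $\mathrm{sd}$ is the subdivision functor and $\gamma^n:\mathrm{sd}^n\to\mathrm{id}$ the $n$-fold iterated last vertex map ($\gamma^0=\mathrm{id}$, $\gamma^n_X=\gamma^{n-1}_X\circ\gamma_{\mathrm{sd}^{n-1}X}$). For a finite simplicial set $K$ and simplicial subset $L$, $\mathbb{Z}^{(K,L)}_r:=\ker(\mathbb{Z}^{\mathrm{sd}^rK}\to\mathbb{Z}^{\mathrm{sd}^rL})$; it is a direct summand of the free abelian group $\mathbb{Z}^{\mathrm{sd}^rK}$, so the tensor product of such kernels embeds in the tensor product of the ambient rings. *)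

theory Defs
  imports "HOL-Library.FuncSet"
begin

text \<open>A monotone map phi : [p] -> [q], represented by a function on nat
  (only its values on {0..p} matter).\<close>
definition mono_map :: "nat \<Rightarrow> nat \<Rightarrow> (nat \<Rightarrow> nat) \<Rightarrow> bool" where
  "mono_map p q \<phi> \<longleftrightarrow> (\<forall>i\<le>p. \<phi> i \<le> q) \<and> (\<forall>i j. i \<le> j \<longrightarrow> j \<le> p \<longrightarrow> \<phi> i \<le> \<phi> j)"

text \<open>simp X q = set of q-simplices; act X phi p q x = phi^* x for phi:[p]->[q], x in X_q.\<close>
record 'a sset =
  simp :: "nat \<Rightarrow> 'a set"
  act :: "(nat \<Rightarrow> nat) \<Rightarrow> nat \<Rightarrow> nat \<Rightarrow> 'a \<Rightarrow> 'a"

definition is_sset :: "'a sset \<Rightarrow> bool" where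
  "is_sset X \<longleftrightarrow>
     (\<forall>p q \<phi> x. mono_map p q \<phi> \<longrightarrow> x \<in> simp X q \<longrightarrow> act X \<phi> p q x \<in> simp X p) \<and>
     (\<forall>q x. x \<in> simp X q \<longrightarrow> act X id q q x = x) \<and>
     (\<forall>m p q \<phi> \<psi> x. mono_map p q \<phi> \<longrightarrow> mono_map m p \<psi> \<longrightarrow> x \<in> simp X q \<longrightarrow>
         act X \<psi> m p (act X \<phi> p q x) = act X (\<phi> \<circ> \<psi>) m q x) \<and>
     (\<forall>p q \<phi> \<phi>' x. (\<forall>i\<le>p. \<phi> i = \<phi>' i) \<longrightarrow> act X \<phi> p q x = act X \<phi>' p q x)"

definition nondeg :: "'a sset \<Rightarrow> nat \<Rightarrow> 'a \<Rightarrow> bool" where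
  "nondeg X n x \<longleftrightarrow> x \<in> simp X n \<and>
     \<not> (\<exists>m<n. \<exists>\<sigma> y. mono_map n m \<sigma> \<and> \<sigma> ` {..n} = {..m} \<and> y \<in> simp X m \<and> x = act X \<sigma> n m y)"

definition finite_sset :: "'a sset \<Rightarrow> bool" where
  "finite_sset X \<longleftrightarrow> is_sset X \<and> finite {(n, x). nondeg X n x}"

definition subsset :: "(nat \<Rightarrow> 'a set) \<Rightarrow> 'a sset \<Rightarrow> bool" where
  "subsset L X \<longleftrightarrow> (\<forall>n. L n \<subseteq> simp X n) \<and>
     (\<forall>p q \<phi> x. mono_map p q \<phi> \<longrightarrow> x \<in> L q \<longrightarrow> act X \<phi> p q x \<in> L p)"

definition subs :: "'a sset \<Rightarrow> (nat \<Rightarrow> 'a set) \<Rightarrow> 'a sset" where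
  "subs X L = \<lparr>simp = L, act = act X\<rparr>"

definition smap :: "'a sset \<Rightarrow> 'b sset \<Rightarrow> (nat \<Rightarrow> 'a \<Rightarrow> 'b) \<Rightarrow> bool" where
  "smap X Y f \<longleftrightarrow> (\<forall>n x. x \<in> simp X n \<longrightarrow> f n x \<in> simp Y n) \<and>
     (\<forall>p q \<phi> x. mono_map p q \<phi> \<longrightarrow> x \<in> simp X q \<longrightarrow>
        f p (act X \<phi> p q x) = act Y \<phi> p q (f q x))"

definition sprod :: "'a sset \<Rightarrow> 'b sset \<Rightarrow> ('a \<times> 'b) sset" where
  "sprod X Y = \<lparr>simp = (\<lambda>n. simp X n \<times> simp Y n),
     act = (\<lambda>\<phi> p q z. (act X \<phi> p q (fst z), act Y \<phi> p q (snd z)))\<rparr>"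

definition prod_map :: "(nat \<Rightarrow> 'a \<Rightarrow> 'c) \<Rightarrow> (nat \<Rightarrow> 'b \<Rightarrow> 'd) \<Rightarrow> nat \<Rightarrow> 'a \<times> 'b \<Rightarrow> 'c \<times> 'd" where
  "prod_map f g = (\<lambda>n z. (f n (fst z), g n (snd z)))"

text \<open>Universal carrier type closed under subdivision: Sd n x c stands for the
  class of (x in X_n, c a simplex of sd Delta^n) in the colimit defining sd X.\<close>
datatype 'a ssimp = Base 'a | Sd nat "'a ssimp" "nat set list"

fun unBase :: "'a ssimp \<Rightarrow> 'a" where
  "unBase (Base a) = a"
| "unBase _ = undefined"

definition lift :: "'a sset \<Rightarrow> 'a ssimp sset" where
  "lift X = \<lparr>simp = (\<lambda>n. Base ` simp X n),
     act = (\<lambda>\<phi> p q x. Base (act X \<phi> p q (unBase x)))\<rparr>"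

definition liftmap :: "(nat \<Rightarrow> 'a \<Rightarrow> 'b) \<Rightarrow> nat \<Rightarrow> 'a ssimp \<Rightarrow> 'b ssimp" where
  "liftmap f = (\<lambda>n x. Base (f n (unBase x)))"

text \<open>p-simplices of sd Delta^n = nerve of the poset of nonempty subsets of [n]:
  chains c_0 \<subseteq> ... \<subseteq> c_p.\<close>
definition sdD :: "nat \<Rightarrow> nat \<Rightarrow> nat set list set" where
  "sdD n p = {c. length c = Suc p \<and> (\<forall>i<Suc p. c ! i \<noteq> {} \<and> c ! i \<subseteq> {..n}) \<and>
                 (\<forall>i j. i \<le> j \<longrightarrow> j < Suc p \<longrightarrow> c ! i \<subseteq> c ! j)}"

text \<open>Generating relation of the colimit sd X = colim_{Delta^n -> X} sd Delta^n (level p):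
  (m, theta^* x, c) ~ (n, x, theta_* c) for theta : [m] -> [n].\<close>
definition sd_rel :: "'a ssimp sset \<Rightarrow> nat \<Rightarrow> (nat \<times> 'a ssimp \<times> nat set list) \<Rightarrow>
    (nat \<times> 'a ssimp \<times> nat set list) \<Rightarrow> bool" where
  "sd_rel X p u v \<longleftrightarrow> (\<exists>m n y x c \<theta>. u = (m, y, c) \<and> v = (n, x, map (\<lambda>S. \<theta> ` S) c) \<and>
      mono_map m n \<theta> \<and> x \<in> simp X n \<and> y = act X \<theta> m n x \<and> c \<in> sdD m p)"

text \<open>Chosen representative of the equivalence class (depends only on the class).\<close>
definition cls :: "'a ssimp sset \<Rightarrow> nat \<Rightarrow> nat \<times> 'a ssimp \<times> nat set list \<Rightarrow> 'a ssimp" where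
  "cls X p u = (case (SOME v. equivclp (sd_rel X p) u v) of (n, x, c) \<Rightarrow> Sd n x c)"

definition sd :: "'a ssimp sset \<Rightarrow> 'a ssimp sset" where
  "sd X = \<lparr>simp = (\<lambda>p. {cls X p (n, x, c) | n x c. x \<in> simp X n \<and> c \<in> sdD n p}),
     act = (\<lambda>\<psi> m p s. case s of Sd n x c \<Rightarrow> cls X m (n, x, map (\<lambda>i. c ! \<psi> i) [0..<Suc m])
                                | Base _ \<Rightarrow> undefined)\<rparr>"

text \<open>sd f for f : X -> Y (Y the target).\<close>
definition sd_map :: "'b ssimp sset \<Rightarrow> (nat \<Rightarrow> 'a ssimp \<Rightarrow> 'b ssimp) \<Rightarrow> nat \<Rightarrow> 'a ssimp \<Rightarrow> 'b ssimp" where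
  "sd_map Y f = (\<lambda>p s. case s of Sd n x c \<Rightarrow> cls Y p (n, f n x, c) | Base _ \<Rightarrow> undefined)"

text \<open>Last vertex map gamma_X : sd X -> X, induced by S \<mapsto> max S on sd Delta^n -> Delta^n.\<close>
definition lastv :: "'a ssimp sset \<Rightarrow> nat \<Rightarrow> 'a ssimp \<Rightarrow> 'a ssimp" where
  "lastv X = (\<lambda>p s. case s of Sd n x c \<Rightarrow> act X (\<lambda>i. Max (c ! i)) p n x | Base _ \<Rightarrow> undefined)"

definition sdn :: "nat \<Rightarrow> 'a ssimp sset \<Rightarrow> 'a ssimp sset" where
  "sdn r X = (sd ^^ r) X"

fun sdmapn :: "nat \<Rightarrow> 'b ssimp sset \<Rightarrow> (nat \<Rightarrow> 'a ssimp \<Rightarrow> 'b ssimp) \<Rightarrow> nat \<Rightarrow> 'a ssimp \<Rightarrow> 'b ssimp" where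
  "sdmapn 0 Y f = f"
| "sdmapn (Suc r) Y f = sd_map (sdn r Y) (sdmapn r Y f)"

fun gam :: "nat \<Rightarrow> 'a ssimp sset \<Rightarrow> nat \<Rightarrow> 'a ssimp \<Rightarrow> 'a ssimp" where
  "gam 0 X = (\<lambda>p x. x)"
| "gam (Suc n) X = (\<lambda>p s. gam n X p (lastv (sdn n X) p s))"

text \<open>Z[t_0..t_p]/(1 - sum t_i) is modelled as the ring of integer polynomial functions on
  the integral points of the hyperplane sum t_i = 1 in Z^{p+1}.\<close>
definition hyper :: "nat \<Rightarrow> (nat \<Rightarrow> int) set" where
  "hyper p = {t. (\<forall>i>p. t i = 0) \<and> (\<Sum>i\<le>p. t i) = 1}"

inductive_set polyfun :: "nat \<Rightarrow> ((nat \<Rightarrow> int) \<Rightarrow> int) set" for k :: nat where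
  pf_const: "(\<lambda>t. c) \<in> polyfun k"
| pf_var: "i < k \<Longrightarrow> (\<lambda>t. t i) \<in> polyfun k"
| pf_add: "F \<in> polyfun k \<Longrightarrow> G \<in> polyfun k \<Longrightarrow> (\<lambda>t. F t + G t) \<in> polyfun k"
| pf_mult: "F \<in> polyfun k \<Longrightarrow> G \<in> polyfun k \<Longrightarrow> (\<lambda>t. F t * G t) \<in> polyfun k"

definition ZD :: "nat \<Rightarrow> ((nat \<Rightarrow> int) \<Rightarrow> int) set" where
  "ZD p = {restrict F (hyper p) | F. F \<in> polyfun (Suc p)}"

definition push :: "(nat \<Rightarrow> nat) \<Rightarrow> nat \<Rightarrow> (nat \<Rightarrow> int) \<Rightarrow> nat \<Rightarrow> int" where
  "push \<phi> p u = (\<lambda>i. \<Sum>j\<in>{j. j \<le> p \<and> \<phi> j = i}. u j)"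

definition ZDelta :: "((nat \<Rightarrow> int) \<Rightarrow> int) sset" where
  "ZDelta = \<lparr>simp = ZD, act = (\<lambda>\<phi> p q F. restrict (\<lambda>u. F (push \<phi> p u)) (hyper p))\<rparr>"

text \<open>Z^X = Hom(X, Z^Delta) (extensional representatives).\<close>
definition zfun :: "'a sset \<Rightarrow> (nat \<Rightarrow> 'a \<Rightarrow> (nat \<Rightarrow> int) \<Rightarrow> int) set" where
  "zfun X = {g. smap X ZDelta g \<and> (\<forall>n x. x \<notin> simp X n \<longrightarrow> g n x = undefined)}"

definition zmul :: "'a sset \<Rightarrow> (nat \<Rightarrow> 'a \<Rightarrow> (nat \<Rightarrow> int) \<Rightarrow> int) \<Rightarrow>
    (nat \<Rightarrow> 'a \<Rightarrow> (nat \<Rightarrow> int) \<Rightarrow> int) \<Rightarrow> nat \<Rightarrow> 'a \<Rightarrow> (nat \<Rightarrow> int) \<Rightarrow> int" where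
  "zmul X g h = (\<lambda>n x. if x \<in> simp X n then restrict (\<lambda>t. g n x t * h n x t) (hyper n) else undefined)"

definition zzero :: "'a sset \<Rightarrow> nat \<Rightarrow> 'a \<Rightarrow> (nat \<Rightarrow> int) \<Rightarrow> int" where
  "zzero X = (\<lambda>n x. if x \<in> simp X n then restrict (\<lambda>t. 0) (hyper n) else undefined)"

definition pullback :: "'a sset \<Rightarrow> (nat \<Rightarrow> 'a \<Rightarrow> 'b) \<Rightarrow> (nat \<Rightarrow> 'b \<Rightarrow> (nat \<Rightarrow> int) \<Rightarrow> int) \<Rightarrow>
    nat \<Rightarrow> 'a \<Rightarrow> (nat \<Rightarrow> int) \<Rightarrow> int" where
  "pullback X f g = (\<lambda>n x. if x \<in> simp X n then g n (f n x) else undefined)"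

definition zrel :: "nat \<Rightarrow> 'a sset \<Rightarrow> (nat \<Rightarrow> 'a set) \<Rightarrow> (nat \<Rightarrow> 'a ssimp \<Rightarrow> (nat \<Rightarrow> int) \<Rightarrow> int) set" where
  "zrel r K L = {a \<in> zfun (sdn r (lift K)).
      pullback (sdn r (lift (subs K L))) (sdmapn r (lift K) (\<lambda>n x. x)) a = zzero (sdn r (lift (subs K L)))}"

definition mu :: "nat \<Rightarrow> nat \<Rightarrow> 'a sset \<Rightarrow> 'b sset \<Rightarrow>
    (nat \<Rightarrow> 'a ssimp \<Rightarrow> (nat \<Rightarrow> int) \<Rightarrow> int) \<Rightarrow> (nat \<Rightarrow> 'b ssimp \<Rightarrow> (nat \<Rightarrow> int) \<Rightarrow> int) \<Rightarrow>
    nat \<Rightarrow> ('a \<times> 'b) ssimp \<Rightarrow> (nat \<Rightarrow> int) \<Rightarrow> int" where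
  "mu r s K K' a b =
     (let P = sdn (r + s) (lift (sprod K K'));
          pr1 = sdmapn (r + s) (lift K) (liftmap (\<lambda>n. fst));
          pr2 = sdmapn (r + s) (lift K') (liftmap (\<lambda>n. snd));
          a' = pullback (sdn s (sdn r (lift K))) (gam s (sdn r (lift K))) a;
          b' = pullback (sdn r (sdn s (lift K'))) (gam r (sdn s (lift K'))) b
      in zmul P (pullback P pr1 a') (pullback P pr2 b'))"

definition pair_union :: "'a sset \<Rightarrow> (nat \<Rightarrow> 'a set) \<Rightarrow> 'b sset \<Rightarrow> (nat \<Rightarrow> 'b set) \<Rightarrow> nat \<Rightarrow> ('a \<times> 'b) set" where
  "pair_union K L K' L' = (\<lambda>n. (simp K n \<times> L' n) \<union> (L n \<times> simp K' n))"

end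

theory Submission
  imports Defs
begin

(* On the
   part sd^(r+s)(K x L') of the subdivided product, the composite
   sd^(r+s)(K x L') -> sd^(r+s) K' -> sd^s K' of sd^(r+s) pr_2 with the iterated last vertex map
   factors through sd^s L', because both sd^(r+s) and gamma^r are natural; as b vanishes on
   sd^s L', the second factor vanishes there.  Symmetrically the first factor vanishes on
   sd^(r+s)(L x K'), and every simplex of sd^(r+s)((K x L') union (L x K')) comes from one of these
   two parts.  Naturality of mu is the same naturality argument, applied to each factor. *)

section \<open>Simplicial sets and subdivision\<close>

lemma is_ssetD:
  assumes "is_sset X"
  shows is_ssetD_simp: "mono_map p q \<phi> \<Longrightarrow> x \<in> simp X q \<Longrightarrow> act X \<phi> p q x \<in> simp X p"
    and is_ssetD_comp: "mono_map p q \<phi> \<Longrightarrow> mono_map m p \<psi> \<Longrightarrow> x \<in> simp X q \<Longrightarrow>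
      act X \<psi> m p (act X \<phi> p q x) = act X (\<phi> \<circ> \<psi>) m q x"
    and is_ssetD_cong: "(\<And>i. i \<le> p \<Longrightarrow> \<phi> i = \<phi>' i) \<Longrightarrow> act X \<phi> p q x = act X \<phi>' p q x"
  using assms unfolding is_sset_def by blast+

lemma smapD:
  assumes "smap X Y f"
  shows smapD_simp: "x \<in> simp X n \<Longrightarrow> f n x \<in> simp Y n"
    and smapD_act: "mono_map p q \<phi> \<Longrightarrow> x \<in> simp X q \<Longrightarrow> f p (act X \<phi> p q x) = act Y \<phi> p q (f q x)"
  using assms unfolding smap_def by blast+

lemma smap_comp: "smap X Y f \<Longrightarrow> smap Y Z g \<Longrightarrow> smap X Z (\<lambda>n x. g n (f n x))"
  unfolding smap_def by simp

lemma mono_map_id: "mono_map q q id"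
  unfolding mono_map_def by simp

lemma mono_map_comp: "mono_map p q \<phi> \<Longrightarrow> mono_map m p \<psi> \<Longrightarrow> mono_map m q (\<phi> \<circ> \<psi>)"
  unfolding mono_map_def by auto

lemma length_sdD: "c \<in> sdD n p \<Longrightarrow> length c = Suc p"
  unfolding sdD_def by simp

lemma sdD_nth:
  assumes "c \<in> sdD n p" "i \<le> p"
  shows "finite (c ! i)" "c ! i \<noteq> {}" "c ! i \<subseteq> {..n}"
  using assms finite_subset[of "c ! i" "{..n}"] unfolding sdD_def by (auto simp: less_Suc_eq_le)

lemma sdD_image: "mono_map m n \<theta> \<Longrightarrow> c \<in> sdD m p \<Longrightarrow> map ((`) \<theta>) c \<in> sdD n p"
  unfolding sdD_def mono_map_def by (auto 0 3 simp: image_mono)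

lemma sdD_reindex: "mono_map m p \<psi> \<Longrightarrow> c \<in> sdD n p \<Longrightarrow> map (\<lambda>i. c ! \<psi> i) [0..<Suc m] \<in> sdD n m"
  unfolding sdD_def mono_map_def by (auto simp: less_Suc_eq_le simp del: upt_Suc)

lemma mono_map_Max_sdD: "c \<in> sdD n p \<Longrightarrow> mono_map p n (\<lambda>i. Max (c ! i))"
  unfolding mono_map_def
proof (intro conjI allI impI)
  fix i assume "c \<in> sdD n p" "i \<le> p"
  then show "Max (c ! i) \<le> n" using sdD_nth[of c n p i] by auto
next
  fix i j assume c: "c \<in> sdD n p" and ij: "i \<le> j" "j \<le> p"
  then have "c ! i \<subseteq> c ! j" unfolding sdD_def by auto
  then show "Max (c ! i) \<le> Max (c ! j)" using sdD_nth[OF c, of i] sdD_nth[OF c, of j] ij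
    by (meson Max_mono le_trans)
qed

lemma Max_image_mono_map:
  assumes \<theta>: "mono_map m n \<theta>" and S: "finite S" "S \<noteq> {}" "S \<subseteq> {..m}"
  shows "Max (\<theta> ` S) = \<theta> (Max S)"
proof (rule Max_eqI)
  fix y assume "y \<in> \<theta> ` S"
  then obtain s where "s \<in> S" "y = \<theta> s" by blast
  moreover have "Max S \<in> S" "s \<le> Max S" using S \<open>s \<in> S\<close> by simp_all
  ultimately show "y \<le> \<theta> (Max S)" using \<theta> S unfolding mono_map_def by blast
qed (use S in auto)

lemma equivclp_SOME: "equivclp R u (SOME v. equivclp R u v)"
  by (rule someI[where x = u]) simp

lemma cls_eqI:
  assumes "equivclp (sd_rel X p) u v"
  shows "cls X p u = cls X p v"
proof -
  have "equivclp (sd_rel X p) u w \<longleftrightarrow> equivclp (sd_rel X p) v w" for w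
    using assms equivclp_sym equivclp_trans by metis
  then have "equivclp (sd_rel X p) u = equivclp (sd_rel X p) v" by (rule ext)
  then show ?thesis unfolding cls_def by simp
qed

lemma cls_sd_rel: "sd_rel X p u v \<Longrightarrow> cls X p u = cls X p v"
  by (rule cls_eqI, rule r_into_equivclp)

lemma cls_obtain:
  obtains n x c where "cls X p u = Sd n x c" "equivclp (sd_rel X p) u (n, x, c)"
  using equivclp_SOME[of "sd_rel X p" u] unfolding cls_def
  by (cases "SOME v. equivclp (sd_rel X p) u v") auto

lemma sd_relE:
  assumes "sd_rel X p u v"
  obtains m n x c \<theta> where "u = (m, act X \<theta> m n x, c)" "v = (n, x, map ((`) \<theta>) c)"
    "mono_map m n \<theta>" "x \<in> simp X n" "c \<in> sdD m p"
  using assms unfolding sd_rel_def by blast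

text \<open>A function defined on the chosen representatives of the colimit sd X may be evaluated
  at any representative, provided it respects the generating relation.\<close>
lemma case_cls_eq:
  assumes "\<And>u v. sd_rel X p u v \<Longrightarrow> (case u of (n, x, c) \<Rightarrow> F n x c) = (case v of (n, x, c) \<Rightarrow> F n x c)"
  shows "(case cls X p (n, x, c) of Sd n' x' c' \<Rightarrow> F n' x' c' | Base _ \<Rightarrow> undefined) = F n x c"
proof -
  obtain n' x' c' where cls: "cls X p (n, x, c) = Sd n' x' c'"
    and rel: "equivclp (sd_rel X p) (n, x, c) (n', x', c')"
    by (rule cls_obtain)
  have "(case (n, x, c) of (n, x, c) \<Rightarrow> F n x c) = (case (n', x', c') of (n, x, c) \<Rightarrow> F n x c)"
    using rel by (induction rule: equivclp_induct) (auto dest: assms)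
  then show ?thesis using cls by simp
qed

lemma equivclp_sd_rel_wellformed:
  assumes X: "is_sset X" and rel: "equivclp (sd_rel X p) u v"
    and u: "case u of (n, x, c) \<Rightarrow> x \<in> simp X n \<and> c \<in> sdD n p"
  shows "case v of (n, x, c) \<Rightarrow> x \<in> simp X n \<and> c \<in> sdD n p"
proof -
  have "(case u of (n, x, c) \<Rightarrow> x \<in> simp X n \<and> c \<in> sdD n p) \<and>
        (case v of (n, x, c) \<Rightarrow> x \<in> simp X n \<and> c \<in> sdD n p)"
    if "sd_rel X p u v" for u v
    using that by (rule sd_relE) (auto intro: is_ssetD_simp[OF X] sdD_image)
  with rel u show ?thesis by (induction rule: equivclp_induct) auto
qed

lemma cls_in_sd: "x \<in> simp X n \<Longrightarrow> c \<in> sdD n p \<Longrightarrow> cls X p (n, x, c) \<in> simp (sd X) p"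
  unfolding sd_def by auto

lemma sd_simpE:
  assumes X: "is_sset X" and s: "s \<in> simp (sd X) p"
  obtains n x c where "x \<in> simp X n" "c \<in> sdD n p" "cls X p (n, x, c) = s"
proof -
  obtain n0 x0 c0 where s0: "s = cls X p (n0, x0, c0)" "x0 \<in> simp X n0" "c0 \<in> sdD n0 p"
    using s unfolding sd_def by auto
  obtain n x c where cls: "cls X p (n0, x0, c0) = Sd n x c"
    and rel: "equivclp (sd_rel X p) (n0, x0, c0) (n, x, c)"
    by (rule cls_obtain)
  have "x \<in> simp X n \<and> c \<in> sdD n p"
    using equivclp_sd_rel_wellformed[OF X rel] s0 by simp
  moreover have "cls X p (n, x, c) = s" using cls_eqI[OF rel] s0 by simp
  ultimately show ?thesis by (intro that) simp_all
qed

lemma sd_map_cls: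
  assumes f: "smap X Y f"
  shows "sd_map Y f p (cls X p (n, x, c)) = cls Y p (n, f n x, c)"
  unfolding sd_map_def
proof (rule case_cls_eq)
  fix u v assume "sd_rel X p u v"
  then show "(case u of (n, x, c) \<Rightarrow> cls Y p (n, f n x, c)) = (case v of (n, x, c) \<Rightarrow> cls Y p (n, f n x, c))"
  proof (cases rule: sd_relE)
    case (1 m n x c \<theta>)
    then have "sd_rel Y p (m, f m (act X \<theta> m n x), c) (n, f n x, map ((`) \<theta>) c)"
      using smapD[OF f] unfolding sd_rel_def by blast
    then show ?thesis using 1 cls_sd_rel by simp
  qed
qed

lemma lastv_cls:
  assumes X: "is_sset X"
  shows "lastv X p (cls X p (n, x, c)) = act X (\<lambda>i. Max (c ! i)) p n x"
  unfolding lastv_def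
proof (rule case_cls_eq)
  fix u v assume "sd_rel X p u v"
  then show "(case u of (n, x, c) \<Rightarrow> act X (\<lambda>i. Max (c ! i)) p n x) =
             (case v of (n, x, c) \<Rightarrow> act X (\<lambda>i. Max (c ! i)) p n x)"
  proof (cases rule: sd_relE)
    case (1 m n x c \<theta>)
    have "act X (\<lambda>i. Max (c ! i)) p m (act X \<theta> m n x) = act X (\<theta> \<circ> (\<lambda>i. Max (c ! i))) p n x"
      using is_ssetD_comp[OF X 1(3) mono_map_Max_sdD[OF 1(5)] 1(4)] .
    also have "\<dots> = act X (\<lambda>i. Max (map ((`) \<theta>) c ! i)) p n x"
      using Max_image_mono_map[OF 1(3) sdD_nth[OF 1(5)]] length_sdD[OF 1(5)]
      by (intro is_ssetD_cong[OF X]) simp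
    finally show ?thesis using 1 by simp
  qed
qed

lemma act_sd_cls:
  assumes \<psi>: "mono_map m p \<psi>"
  shows "act (sd X) \<psi> m p (cls X p (n, x, c)) = cls X m (n, x, map (\<lambda>i. c ! \<psi> i) [0..<Suc m])"
  unfolding sd_def sset.select_convs
proof (rule case_cls_eq)
  fix u v assume "sd_rel X p u v"
  then show "(case u of (n, x, c) \<Rightarrow> cls X m (n, x, map (\<lambda>i. c ! \<psi> i) [0..<Suc m])) =
             (case v of (n, x, c) \<Rightarrow> cls X m (n, x, map (\<lambda>i. c ! \<psi> i) [0..<Suc m]))"
  proof (cases rule: sd_relE)
    case (1 m' n x d \<theta>)
    have eq: "map (\<lambda>i. map ((`) \<theta>) d ! \<psi> i) [0..<Suc m] = map ((`) \<theta>) (map (\<lambda>i. d ! \<psi> i) [0..<Suc m])"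
      using \<psi> length_sdD[OF 1(5)] unfolding mono_map_def by (auto simp: less_Suc_eq_le simp del: upt_Suc)
    have "sd_rel X m (m', act X \<theta> m' n x, map (\<lambda>i. d ! \<psi> i) [0..<Suc m])
        (n, x, map ((`) \<theta>) (map (\<lambda>i. d ! \<psi> i) [0..<Suc m]))"
      unfolding sd_rel_def using 1 sdD_reindex[OF \<psi> 1(5)] by blast
    then show ?thesis unfolding 1(1,2) prod.case eq by (rule cls_sd_rel)
  qed
qed

lemma act_sd_comp_cls:
  assumes \<phi>: "mono_map p q \<phi>" and \<psi>: "mono_map m p \<psi>"
  shows "act (sd X) \<psi> m p (act (sd X) \<phi> p q (cls X q (n, x, c))) = act (sd X) (\<phi> \<circ> \<psi>) m q (cls X q (n, x, c))"
proof -
  have "map (\<lambda>i. map (\<lambda>i. c ! \<phi> i) [0..<Suc p] ! \<psi> i) [0..<Suc m] = map (\<lambda>i. c ! (\<phi> \<circ> \<psi>) i) [0..<Suc m]"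
    using \<psi> unfolding mono_map_def by (auto simp: less_Suc_eq_le simp del: upt_Suc)
  then show ?thesis
    by (simp only: act_sd_cls[OF \<phi>] act_sd_cls[OF \<psi>] act_sd_cls[OF mono_map_comp[OF \<phi> \<psi>]])
qed

lemma is_sset_sd:
  assumes X: "is_sset X"
  shows "is_sset (sd X)"
  unfolding is_sset_def
proof (intro conjI allI impI)
  fix p q \<phi> s assume \<phi>: "mono_map p q \<phi>" and "s \<in> simp (sd X) q"
  then obtain n x c where x: "x \<in> simp X n" and c: "c \<in> sdD n q" and s: "cls X q (n, x, c) = s"
    using sd_simpE[OF X] by blast
  show "act (sd X) \<phi> p q s \<in> simp (sd X) p"
    unfolding s[symmetric] act_sd_cls[OF \<phi>] by (rule cls_in_sd[OF x sdD_reindex[OF \<phi> c]])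
next
  fix q s assume "s \<in> simp (sd X) q"
  then obtain n x c where c: "c \<in> sdD n q" and s: "cls X q (n, x, c) = s"
    using sd_simpE[OF X] by blast
  have "map (\<lambda>i. c ! id i) [0..<Suc q] = c"
    using length_sdD[OF c] map_nth[of c] by simp
  then show "act (sd X) id q q s = s"
    unfolding s[symmetric] act_sd_cls[OF mono_map_id] by simp
next
  fix m p q \<phi> \<psi> s assume \<phi>: "mono_map p q \<phi>" and \<psi>: "mono_map m p \<psi>" and "s \<in> simp (sd X) q"
  then obtain n x c where s: "cls X q (n, x, c) = s"
    using sd_simpE[OF X] by blast
  show "act (sd X) \<psi> m p (act (sd X) \<phi> p q s) = act (sd X) (\<phi> \<circ> \<psi>) m q s"
    unfolding s[symmetric] by (rule act_sd_comp_cls[OF \<phi> \<psi>])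
next
  fix p q :: nat and \<phi> \<phi>' :: "nat \<Rightarrow> nat" and s assume "\<forall>i\<le>p. \<phi> i = \<phi>' i"
  then have eq: "map (\<lambda>i. c ! \<phi> i) [0..<Suc p] = map (\<lambda>i. c ! \<phi>' i) [0..<Suc p]" for c :: "nat set list"
    by (simp add: less_Suc_eq_le del: upt_Suc)
  show "act (sd X) \<phi> p q s = act (sd X) \<phi>' p q s"
  proof (cases s)
    case (Sd n x c)
    show ?thesis by (simp only: Sd sd_def sset.select_convs ssimp.case eq[of c])
  qed (simp add: sd_def)
qed

lemma smap_sd_map:
  assumes X: "is_sset X" and f: "smap X Y f"
  shows "smap (sd X) (sd Y) (sd_map Y f)"
  unfolding smap_def
proof (intro conjI allI impI)
  fix p s assume "s \<in> simp (sd X) p"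
  then obtain n x c where x: "x \<in> simp X n" and c: "c \<in> sdD n p" and s: "cls X p (n, x, c) = s"
    using sd_simpE[OF X] by blast
  show "sd_map Y f p s \<in> simp (sd Y) p"
    unfolding s[symmetric] sd_map_cls[OF f] by (rule cls_in_sd[OF smapD_simp[OF f x] c])
next
  fix p q \<phi> s assume \<phi>: "mono_map p q \<phi>" and "s \<in> simp (sd X) q"
  then obtain n x c where s: "cls X q (n, x, c) = s"
    using sd_simpE[OF X] by blast
  show "sd_map Y f p (act (sd X) \<phi> p q s) = act (sd Y) \<phi> p q (sd_map Y f q s)"
    unfolding s[symmetric] by (simp only: act_sd_cls[OF \<phi>] sd_map_cls[OF f])
qed

lemma smap_lastv:
  assumes X: "is_sset X"
  shows "smap (sd X) X (lastv X)"
  unfolding smap_def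
proof (intro conjI allI impI)
  fix p s assume "s \<in> simp (sd X) p"
  then obtain n x c where x: "x \<in> simp X n" and c: "c \<in> sdD n p" and s: "cls X p (n, x, c) = s"
    using sd_simpE[OF X] by blast
  show "lastv X p s \<in> simp X p"
    unfolding s[symmetric] lastv_cls[OF X] by (rule is_ssetD_simp[OF X mono_map_Max_sdD[OF c] x])
next
  fix p q \<phi> s assume \<phi>: "mono_map p q \<phi>" and "s \<in> simp (sd X) q"
  then obtain n x c where x: "x \<in> simp X n" and c: "c \<in> sdD n q" and s: "cls X q (n, x, c) = s"
    using sd_simpE[OF X] by blast
  have "act X \<phi> p q (lastv X q s) = act X ((\<lambda>i. Max (c ! i)) \<circ> \<phi>) p n x"
    unfolding s[symmetric] lastv_cls[OF X] by (rule is_ssetD_comp[OF X mono_map_Max_sdD[OF c] \<phi> x])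
  also have "\<dots> = act X (\<lambda>i. Max (map (\<lambda>i. c ! \<phi> i) [0..<Suc p] ! i)) p n x"
    by (rule is_ssetD_cong[OF X]) (simp del: upt_Suc add: less_Suc_eq_le)
  also have "\<dots> = lastv X p (act (sd X) \<phi> p q s)"
    unfolding s[symmetric] by (simp only: act_sd_cls[OF \<phi>] lastv_cls[OF X])
  finally show "lastv X p (act (sd X) \<phi> p q s) = act X \<phi> p q (lastv X q s)" ..
qed

lemma lastv_natural:
  assumes X: "is_sset X" and Y: "is_sset Y" and f: "smap X Y f" and s: "s \<in> simp (sd X) p"
  shows "lastv Y p (sd_map Y f p s) = f p (lastv X p s)"
proof -
  obtain n x c where x: "x \<in> simp X n" and c: "c \<in> sdD n p" and s: "cls X p (n, x, c) = s"
    using sd_simpE[OF X s] by blast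
  show ?thesis
    unfolding s[symmetric] sd_map_cls[OF f] lastv_cls[OF X] lastv_cls[OF Y]
    by (rule smapD_act[OF f mono_map_Max_sdD[OF c] x, symmetric])
qed

lemma sd_map_comp:
  assumes X: "is_sset X" and f: "smap X Y f" and g: "smap Y Z g" and h: "smap X Z h"
    and h_eq: "\<And>n x. x \<in> simp X n \<Longrightarrow> h n x = g n (f n x)" and s: "s \<in> simp (sd X) p"
  shows "sd_map Z g p (sd_map Y f p s) = sd_map Z h p s"
proof -
  obtain n x c where x: "x \<in> simp X n" and s: "cls X p (n, x, c) = s"
    using sd_simpE[OF X s] by blast
  show ?thesis
    unfolding s[symmetric] sd_map_cls[OF f] sd_map_cls[OF g] sd_map_cls[OF h] h_eq[OF x] ..
qed

lemma sdn_0 [simp]: "sdn 0 X = X"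
  by (simp add: sdn_def)

lemma sdn_Suc [simp]: "sdn (Suc k) X = sd (sdn k X)"
  by (simp add: sdn_def)

lemma sdn_add: "sdn r (sdn s X) = sdn (r + s) X"
  by (simp add: sdn_def funpow_add)

lemma sdmapn_add: "sdmapn (r + s) Y f = sdmapn s (sdn r Y) (sdmapn r Y f)"
  by (induction s) (simp_all add: sdn_add add.commute)

lemma is_sset_sdn: "is_sset X \<Longrightarrow> is_sset (sdn k X)"
  by (induction k) (simp_all add: is_sset_sd)

lemma smap_sdmapn: "is_sset X \<Longrightarrow> smap X Y f \<Longrightarrow> smap (sdn k X) (sdn k Y) (sdmapn k Y f)"
  by (induction k) (simp_all add: smap_sd_map is_sset_sdn)

lemma sdmapn_comp:
  assumes X: "is_sset X" and Y: "is_sset Y" and f: "smap X Y f" and g: "smap Y Z g" and h: "smap X Z h"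
    and h_eq: "\<And>n x. x \<in> simp X n \<Longrightarrow> h n x = g n (f n x)"
  shows "s \<in> simp (sdn k X) p \<Longrightarrow> sdmapn k Z g p (sdmapn k Y f p s) = sdmapn k Z h p s"
proof (induction k arbitrary: p s)
  case 0
  then show ?case using h_eq by simp
next
  case (Suc k)
  then show ?case
    using sd_map_comp[OF is_sset_sdn[OF X] smap_sdmapn[OF X f] smap_sdmapn[OF Y g] smap_sdmapn[OF X h]]
    by (simp add: Suc.IH)
qed

lemma smap_gam: "is_sset X \<Longrightarrow> smap (sdn k X) X (gam k X)"
proof (induction k)
  case 0
  then show ?case unfolding smap_def by simp
next
  case (Suc k)
  then show ?case using smap_comp[OF smap_lastv[OF is_sset_sdn] Suc.IH] by simp
qed

lemma gam_natural:
  assumes X: "is_sset X" and Y: "is_sset Y" and f: "smap X Y f"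
  shows "s \<in> simp (sdn k X) p \<Longrightarrow> gam k Y p (sdmapn k Y f p s) = f p (gam k X p s)"
proof (induction k arbitrary: p s)
  case 0
  then show ?case by simp
next
  case (Suc k)
  have "lastv (sdn k Y) p (sd_map (sdn k Y) (sdmapn k Y f) p s) = sdmapn k Y f p (lastv (sdn k X) p s)"
    using lastv_natural[OF is_sset_sdn[OF X] is_sset_sdn[OF Y] smap_sdmapn[OF X f]] Suc.prems by simp
  moreover have "lastv (sdn k X) p s \<in> simp (sdn k X) p"
    using smapD_simp[OF smap_lastv[OF is_sset_sdn[OF X]]] Suc.prems by simp
  ultimately show ?case using Suc.IH by simp
qed

lemma is_sset_lift: "is_sset X \<Longrightarrow> is_sset (lift X)"
  unfolding is_sset_def lift_def by auto

lemma smap_liftmap: "smap X Y f \<Longrightarrow> smap (lift X) (lift Y) (liftmap f)"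
  unfolding smap_def lift_def liftmap_def by auto

lemma is_sset_subs: "is_sset X \<Longrightarrow> subsset L X \<Longrightarrow> is_sset (subs X L)"
  unfolding is_sset_def subsset_def subs_def by (simp; meson subsetD)

lemma smap_lift_incl: "subsset L X \<Longrightarrow> smap (lift (subs X L)) (lift X) (\<lambda>n x. x)"
  unfolding smap_def subsset_def subs_def lift_def by auto

lemma smap_lift_subs:
  assumes "smap X Y f" "subsset L X" "\<And>n. f n ` L n \<subseteq> M n"
  shows "smap (lift (subs X L)) (lift (subs Y M)) (liftmap f)"
  using assms unfolding smap_def subsset_def subs_def lift_def liftmap_def by (auto 0 3 simp: subset_eq)

lemma subsset_Un: "subsset A X \<Longrightarrow> subsset B X \<Longrightarrow> subsset (\<lambda>n. A n \<union> B n) X"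
  unfolding subsset_def by blast

lemma is_sset_sprod: "is_sset K \<Longrightarrow> is_sset K' \<Longrightarrow> is_sset (sprod K K')"
  unfolding is_sset_def sprod_def by auto

lemma smap_fst: "smap (sprod K K') K (\<lambda>n. fst)"
  unfolding smap_def sprod_def by auto

lemma smap_snd: "smap (sprod K K') K' (\<lambda>n. snd)"
  unfolding smap_def sprod_def by auto

lemma smap_prod_map: "smap K1 K f \<Longrightarrow> smap K1' K' f' \<Longrightarrow> smap (sprod K1 K1') (sprod K K') (prod_map f f')"
  unfolding smap_def sprod_def prod_map_def by auto

lemma subsset_sprod_left: "is_sset K \<Longrightarrow> subsset L' K' \<Longrightarrow> subsset (\<lambda>n. simp K n \<times> L' n) (sprod K K')"
  unfolding subsset_def sprod_def by (auto intro: is_ssetD_simp)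

lemma subsset_sprod_right: "is_sset K' \<Longrightarrow> subsset L K \<Longrightarrow> subsset (\<lambda>n. L n \<times> simp K' n) (sprod K K')"
  unfolding subsset_def sprod_def by (auto intro: is_ssetD_simp)

lemma sdn_subs_cover:
  assumes X: "is_sset X" and S: "subsset S X" and \<A>: "\<And>A. A \<in> \<A> \<Longrightarrow> subsset A X"
    and cover: "\<And>n. S n \<subseteq> (\<Union>A\<in>\<A>. A n)"
  shows "y \<in> simp (sdn k (lift (subs X S))) p \<Longrightarrow>
    \<exists>A\<in>\<A>. \<exists>z \<in> simp (sdn k (lift (subs X A))) p.
      sdmapn k (lift X) (\<lambda>n x. x) p y = sdmapn k (lift X) (\<lambda>n x. x) p z"
proof (induction k arbitrary: p y)
  case 0
  then show ?case using cover by (fastforce simp: lift_def subs_def)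
next
  case (Suc k)
  have incl: "smap (sdn k (lift (subs X B))) (sdn k (lift X)) (sdmapn k (lift X) (\<lambda>n x. x))"
    if "subsset B X" for B
    using smap_sdmapn[OF is_sset_lift[OF is_sset_subs[OF X that]] smap_lift_incl[OF that]] .
  obtain n x c where x: "x \<in> simp (sdn k (lift (subs X S))) n" and c: "c \<in> sdD n p"
    and y: "cls (sdn k (lift (subs X S))) p (n, x, c) = y"
    using sd_simpE[OF is_sset_sdn[OF is_sset_lift[OF is_sset_subs[OF X S]]]] Suc.prems
    unfolding sdn_Suc by blast
  obtain A z where A: "A \<in> \<A>" and z: "z \<in> simp (sdn k (lift (subs X A))) n"
    and xz: "sdmapn k (lift X) (\<lambda>n x. x) n x = sdmapn k (lift X) (\<lambda>n x. x) n z"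
    using Suc.IH[OF x] by blast
  have "sdmapn (Suc k) (lift X) (\<lambda>n x. x) p y
      = sdmapn (Suc k) (lift X) (\<lambda>n x. x) p (cls (sdn k (lift (subs X A))) p (n, z, c))"
    unfolding y[symmetric] sdmapn.simps sd_map_cls[OF incl[OF S]] sd_map_cls[OF incl[OF \<A>[OF A]]] xz ..
  moreover have "cls (sdn k (lift (subs X A))) p (n, z, c) \<in> simp (sdn (Suc k) (lift (subs X A))) p"
    using cls_in_sd[OF z c] by simp
  ultimately show ?case using A by blast
qed

section \<open>The rings Z^X\<close>

lemma push_hyper:
  assumes \<phi>: "mono_map p q \<phi>" and u: "u \<in> hyper p"
  shows "push \<phi> p u \<in> hyper q"
proof -
  have "push \<phi> p u i = 0" if "q < i" for i
  proof -
    have empty: "{j. j \<le> p \<and> \<phi> j = i} = {}" using \<phi> that unfolding mono_map_def by force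
    show ?thesis unfolding push_def empty by simp
  qed
  moreover have "(\<Sum>i\<le>q. push \<phi> p u i) = (\<Sum>j\<le>p. u j)"
    using sum.group[of "{..p}" "{..q}" \<phi> u] \<phi> unfolding push_def mono_map_def by auto
  ultimately show ?thesis using u unfolding hyper_def by simp
qed

lemma zfun_pullback:
  assumes X: "is_sset X" and f: "smap X Y f" and g: "g \<in> zfun Y"
  shows "pullback X f g \<in> zfun X"
proof -
  have g: "smap Y ZDelta g" using g unfolding zfun_def by simp
  have "smap X ZDelta (pullback X f g)"
    unfolding smap_def pullback_def
    using smapD[OF g] smapD[OF f] is_ssetD_simp[OF X] by simp
  then show ?thesis unfolding zfun_def pullback_def by simp
qed

lemma ZD_mult: "F \<in> ZD n \<Longrightarrow> G \<in> ZD n \<Longrightarrow> restrict (\<lambda>t. F t * G t) (hyper n) \<in> ZD n"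
proof -
  assume "F \<in> ZD n" "G \<in> ZD n"
  then obtain F0 G0 where F: "F = restrict F0 (hyper n)" "F0 \<in> polyfun (Suc n)"
    and G: "G = restrict G0 (hyper n)" "G0 \<in> polyfun (Suc n)"
    unfolding ZD_def by blast
  have "restrict (\<lambda>t. F t * G t) (hyper n) = restrict (\<lambda>t. F0 t * G0 t) (hyper n)"
    using F G by auto
  moreover have "(\<lambda>t. F0 t * G0 t) \<in> polyfun (Suc n)" using F G by (simp add: polyfun.pf_mult)
  ultimately show ?thesis unfolding ZD_def by blast
qed

lemma zfun_zmul:
  assumes X: "is_sset X" and g: "g \<in> zfun X" and h: "h \<in> zfun X"
  shows "zmul X g h \<in> zfun X"
proof -
  have g: "smap X ZDelta g" and h: "smap X ZDelta h" using g h unfolding zfun_def by auto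
  have "smap X ZDelta (zmul X g h)"
    unfolding smap_def
  proof (intro conjI allI impI)
    fix n x assume "x \<in> simp X n"
    then show "zmul X g h n x \<in> simp ZDelta n"
      using smapD_simp[OF g] smapD_simp[OF h] ZD_mult unfolding zmul_def ZDelta_def by simp
  next
    fix p q \<phi> x assume \<phi>: "mono_map p q \<phi>" and x: "x \<in> simp X q"
    show "zmul X g h p (act X \<phi> p q x) = act ZDelta \<phi> p q (zmul X g h q x)"
      using smapD_act[OF g \<phi> x] smapD_act[OF h \<phi> x] is_ssetD_simp[OF X \<phi> x] x push_hyper[OF \<phi>]
      unfolding zmul_def ZDelta_def by auto
  qed
  then show ?thesis unfolding zfun_def zmul_def by simp
qed

lemma zmul_vanishes:
  assumes "g n x = restrict (\<lambda>t. 0) (hyper n) \<or> h n x = restrict (\<lambda>t. 0) (hyper n)"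
  shows "zmul X g h n x = zzero X n x"
  using assms unfolding zmul_def zzero_def by auto

lemma zrelI:
  assumes "a \<in> zfun (sdn r (lift K))"
    and "\<And>p v. v \<in> simp (sdn r (lift (subs K L))) p \<Longrightarrow>
      a p (sdmapn r (lift K) (\<lambda>n x. x) p v) = restrict (\<lambda>t. 0) (hyper p)"
  shows "a \<in> zrel r K L"
  using assms unfolding zrel_def pullback_def zzero_def by (auto simp: fun_eq_iff)

lemma zrel_vanishes:
  assumes "a \<in> zrel r K L" "v \<in> simp (sdn r (lift (subs K L))) p"
  shows "a p (sdmapn r (lift K) (\<lambda>n x. x) p v) = restrict (\<lambda>t. 0) (hyper p)"
proof -
  have "pullback (sdn r (lift (subs K L))) (sdmapn r (lift K) (\<lambda>n x. x)) a p v = zzero (sdn r (lift (subs K L))) p v"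
    using assms(1) unfolding zrel_def by simp
  then show ?thesis using assms(2) unfolding pullback_def zzero_def by simp
qed

section \<open>The product map\<close>

text \<open>On sd^N A the composite sd^N X \<rightarrow> sd^N T \<rightarrow> sd^s T factors through sd^s M, where b
  vanishes.  N is kept apart from r + s so that the lemma also applies with r and s swapped.\<close>
lemma pullback_gam_vanishes:
  assumes X: "is_sset X" and T: "is_sset T" and A: "subsset A X" and M: "subsset M T"
    and \<pi>: "smap X T \<pi>" and \<pi>A: "\<And>n. \<pi> n ` A n \<subseteq> M n"
    and b: "b \<in> zrel s T M" and N: "N = r + s"
    and z: "z \<in> simp (sdn N (lift (subs X A))) n"
  shows "pullback (sdn N (lift X)) (sdmapn N (lift T) (liftmap \<pi>))
           (pullback (sdn r (sdn s (lift T))) (gam r (sdn s (lift T))) b) n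
           (sdmapn N (lift X) (\<lambda>n x. x) n z) = restrict (\<lambda>t. 0) (hyper n)"
proof -
  have lX: "is_sset (lift X)" and lT: "is_sset (lift T)" using is_sset_lift X T by blast+
  have lA: "is_sset (lift (subs X A))" and lM: "is_sset (lift (subs T M))"
    using is_sset_lift is_sset_subs X T A M by blast+
  have iA: "smap (lift (subs X A)) (lift X) (\<lambda>n x. x)" and iM: "smap (lift (subs T M)) (lift T) (\<lambda>n x. x)"
    using smap_lift_incl A M by blast+
  have l\<pi>: "smap (lift X) (lift T) (liftmap \<pi>)" by (rule smap_liftmap[OF \<pi>])
  have l\<pi>A: "smap (lift (subs X A)) (lift (subs T M)) (liftmap \<pi>)" by (rule smap_lift_subs[OF \<pi> A \<pi>A])
  have l\<pi>A': "smap (lift (subs X A)) (lift T) (liftmap \<pi>)" using smap_comp[OF l\<pi>A iM] by simp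
  define w where "w = sdmapn N (lift X) (\<lambda>n x. x) n z"
  define v where "v = sdmapn N (lift (subs T M)) (liftmap \<pi>) n z"
  have w: "w \<in> simp (sdn N (lift X)) n" unfolding w_def by (rule smapD_simp[OF smap_sdmapn[OF lA iA] z])
  have v: "v \<in> simp (sdn r (sdn s (lift (subs T M)))) n"
    using smapD_simp[OF smap_sdmapn[OF lA l\<pi>A] z] N unfolding v_def by (simp add: sdn_add)
  have \<pi>w: "sdmapn N (lift T) (liftmap \<pi>) n w = sdmapn r (sdn s (lift T)) (sdmapn s (lift T) (\<lambda>n x. x)) n v"
  proof -
    have "sdmapn N (lift T) (liftmap \<pi>) n w = sdmapn N (lift T) (liftmap \<pi>) n z"
      unfolding w_def by (rule sdmapn_comp[OF lA lX iA l\<pi> l\<pi>A' _ z]) simp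
    also have "\<dots> = sdmapn N (lift T) (\<lambda>n x. x) n v"
      unfolding v_def by (rule sdmapn_comp[OF lA lM l\<pi>A iM l\<pi>A' _ z, symmetric]) simp
    also have "sdmapn N (lift T) (\<lambda>n x. x) = sdmapn r (sdn s (lift T)) (sdmapn s (lift T) (\<lambda>n x. x))"
      using sdmapn_add[of s r "lift T" "\<lambda>n x. x"] N by (simp add: add.commute)
    finally show ?thesis .
  qed
  have \<pi>w_in: "sdmapn N (lift T) (liftmap \<pi>) n w \<in> simp (sdn r (sdn s (lift T))) n"
    using smapD_simp[OF smap_sdmapn[OF lX l\<pi>] w] N by (simp add: sdn_add)
  have "gam r (sdn s (lift T)) n (sdmapn r (sdn s (lift T)) (sdmapn s (lift T) (\<lambda>n x. x)) n v)
      = sdmapn s (lift T) (\<lambda>n x. x) n (gam r (sdn s (lift (subs T M))) n v)"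
    by (rule gam_natural[OF is_sset_sdn[OF lM] is_sset_sdn[OF lT] smap_sdmapn[OF lM iM] v])
  moreover have "gam r (sdn s (lift (subs T M))) n v \<in> simp (sdn s (lift (subs T M))) n"
    by (rule smapD_simp[OF smap_gam[OF is_sset_sdn[OF lM]] v])
  ultimately show ?thesis
    unfolding w_def[symmetric] using w \<pi>w_in \<pi>w zrel_vanishes[OF b] by (simp add: pullback_def)
qed

lemma pullback_gam_natural:
  assumes X: "is_sset X" "is_sset X1" and T: "is_sset T" "is_sset T1"
    and F: "smap X1 X F" and g: "smap T1 T g" and \<pi>: "smap X T \<pi>" and \<pi>1: "smap X1 T1 \<pi>1"
    and comm: "\<And>n z. z \<in> simp X1 n \<Longrightarrow> g n (\<pi>1 n z) = \<pi> n (F n z)"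
    and N: "N = r + s" and x: "x \<in> simp (sdn N X1) n"
  shows "pullback (sdn N X1) (sdmapn N T1 \<pi>1)
           (pullback (sdn s (sdn r T1)) (gam s (sdn r T1)) (pullback (sdn r T1) (sdmapn r T g) a)) n x
       = pullback (sdn N X) (sdmapn N T \<pi>) (pullback (sdn s (sdn r T)) (gam s (sdn r T)) a) n
           (sdmapn N X F n x)"
proof -
  have g\<pi>1: "smap X1 T (\<lambda>n z. g n (\<pi>1 n z))" by (rule smap_comp[OF \<pi>1 g])
  define y where "y = sdmapn N T1 \<pi>1 n x"
  have y: "y \<in> simp (sdn s (sdn r T1)) n"
    using smapD_simp[OF smap_sdmapn[OF X(2) \<pi>1] x] N unfolding y_def by (simp add: sdn_add add.commute)
  have Fx: "sdmapn N X F n x \<in> simp (sdn N X) n" by (rule smapD_simp[OF smap_sdmapn[OF X(2) F] x])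
  have \<pi>Fx: "sdmapn N T \<pi> n (sdmapn N X F n x) \<in> simp (sdn s (sdn r T)) n"
    using smapD_simp[OF smap_sdmapn[OF X(1) \<pi>] Fx] N by (simp add: sdn_add add.commute)
  have "sdmapn r T g n (gam s (sdn r T1) n y) = gam s (sdn r T) n (sdmapn N T g n y)"
    using gam_natural[OF is_sset_sdn[OF T(2)] is_sset_sdn[OF T(1)] smap_sdmapn[OF T(2) g] y] N
    by (simp add: sdmapn_add)
  also have "sdmapn N T g n y = sdmapn N T (\<lambda>n z. g n (\<pi>1 n z)) n x"
    unfolding y_def by (rule sdmapn_comp[OF X(2) T(2) \<pi>1 g g\<pi>1 _ x]) simp
  also have "\<dots> = sdmapn N T \<pi> n (sdmapn N X F n x)"
    by (rule sdmapn_comp[OF X(2) X(1) F \<pi> g\<pi>1 comm x, symmetric])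
  finally show ?thesis
    using x y Fx \<pi>Fx smapD_simp[OF smap_gam[OF is_sset_sdn[OF T(2)]] y]
    by (simp add: pullback_def y_def)
qed

lemma mu_in_zfun:
  assumes K: "is_sset K" "is_sset K'"
    and a: "a \<in> zfun (sdn r (lift K))" and b: "b \<in> zfun (sdn s (lift K'))"
  shows "mu r s K K' a b \<in> zfun (sdn (r + s) (lift (sprod K K')))"
proof -
  have lK: "is_sset (lift K)" "is_sset (lift K')" using is_sset_lift K by blast+
  have lP: "is_sset (lift (sprod K K'))" by (rule is_sset_lift[OF is_sset_sprod[OF K]])
  have "pullback (sdn s (sdn r (lift K))) (gam s (sdn r (lift K))) a \<in> zfun (sdn (r + s) (lift K))"
    using zfun_pullback[OF is_sset_sdn[OF is_sset_sdn[OF lK(1)], of s] smap_gam[OF is_sset_sdn[OF lK(1)], of s] a]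
    by (simp add: sdn_add add.commute)
  moreover have "pullback (sdn r (sdn s (lift K'))) (gam r (sdn s (lift K'))) b \<in> zfun (sdn (r + s) (lift K'))"
    using zfun_pullback[OF is_sset_sdn[OF is_sset_sdn[OF lK(2)], of r] smap_gam[OF is_sset_sdn[OF lK(2)], of r] b]
    by (simp add: sdn_add)
  moreover note smap_sdmapn[OF lP smap_liftmap[OF smap_fst]] smap_sdmapn[OF lP smap_liftmap[OF smap_snd]]
  ultimately show ?thesis
    unfolding mu_def Let_def by (intro zfun_zmul zfun_pullback is_sset_sdn lP)
qed

lemma mu_in_zrel:
  assumes K: "is_sset K" "is_sset K'" and L: "subsset L K" "subsset L' K'"
    and a: "a \<in> zrel r K L" and b: "b \<in> zrel s K' L'"
  shows "mu r s K K' a b \<in> zrel (r + s) (sprod K K') (pair_union K L K' L')"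
proof (rule zrelI)
  show "mu r s K K' a b \<in> zfun (sdn (r + s) (lift (sprod K K')))"
    using mu_in_zfun[OF K] a b unfolding zrel_def by blast
next
  fix p y assume y: "y \<in> simp (sdn (r + s) (lift (subs (sprod K K') (pair_union K L K' L')))) p"
  let ?KL' = "\<lambda>n. simp K n \<times> L' n" and ?LK' = "\<lambda>n. L n \<times> simp K' n"
  let ?incl = "sdmapn (r + s) (lift (sprod K K')) (\<lambda>n x. x)"
  have P: "is_sset (sprod K K')" by (rule is_sset_sprod[OF K])
  have KL': "subsset ?KL' (sprod K K')" and LK': "subsset ?LK' (sprod K K')"
    using subsset_sprod_left[OF K(1) L(2)] subsset_sprod_right[OF K(2) L(1)] .
  have "subsset (pair_union K L K' L') (sprod K K')"
    unfolding pair_union_def by (rule subsset_Un[OF KL' LK'])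
  then obtain A z where A: "A = ?KL' \<or> A = ?LK'" and z: "z \<in> simp (sdn (r + s) (lift (subs (sprod K K') A))) p"
    and yz: "?incl p y = ?incl p z"
    using sdn_subs_cover[OF P _ _ _ y, of "{?KL', ?LK'}"] KL' LK' unfolding pair_union_def by blast
  have "subsset A (sprod K K')" using A KL' LK' by blast
  then have "?incl p z \<in> simp (sdn (r + s) (lift (sprod K K'))) p"
    using smapD_simp[OF smap_sdmapn[OF is_sset_lift[OF is_sset_subs[OF P]] smap_lift_incl] z] by blast
  moreover have "pullback (sdn (r + s) (lift (sprod K K'))) (sdmapn (r + s) (lift K') (liftmap (\<lambda>n. snd)))
           (pullback (sdn r (sdn s (lift K'))) (gam r (sdn s (lift K'))) b) p (?incl p z) = restrict (\<lambda>t. 0) (hyper p)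
      \<or> pullback (sdn (r + s) (lift (sprod K K'))) (sdmapn (r + s) (lift K) (liftmap (\<lambda>n. fst)))
           (pullback (sdn s (sdn r (lift K))) (gam s (sdn r (lift K))) a) p (?incl p z) = restrict (\<lambda>t. 0) (hyper p)"
    using A pullback_gam_vanishes[OF P K(2) KL' L(2) smap_snd _ b refl, where n = p and z = z]
      pullback_gam_vanishes[OF P K(1) LK' L(1) smap_fst _ a add.commute, where n = p and z = z] z
    unfolding sprod_def by auto
  ultimately show "mu r s K K' a b p (?incl p y) = restrict (\<lambda>t. 0) (hyper p)"
    unfolding yz mu_def Let_def using zmul_vanishes unfolding zzero_def by (metis (no_types, lifting))
qed

lemma mu_natural:
  assumes K: "is_sset K" "is_sset K'" and K1: "is_sset K1" "is_sset K1'"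
    and f: "smap K1 K f" and f': "smap K1' K' f'"
  shows "mu r s K1 K1' (pullback (sdn r (lift K1)) (sdmapn r (lift K) (liftmap f)) a)
           (pullback (sdn s (lift K1')) (sdmapn s (lift K') (liftmap f')) b)
       = pullback (sdn (r + s) (lift (sprod K1 K1'))) (sdmapn (r + s) (lift (sprod K K')) (liftmap (prod_map f f')))
           (mu r s K K' a b)" (is "?lhs = ?rhs")
proof -
  have lP: "is_sset (lift (sprod K K'))" and lP1: "is_sset (lift (sprod K1 K1'))"
    using is_sset_lift is_sset_sprod K K1 by blast+
  have lK: "is_sset (lift K)" "is_sset (lift K')" and lK1: "is_sset (lift K1)" "is_sset (lift K1')"
    using is_sset_lift K K1 by blast+
  have F: "smap (lift (sprod K1 K1')) (lift (sprod K K')) (liftmap (prod_map f f'))"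
    by (rule smap_liftmap[OF smap_prod_map[OF f f']])
  have "?lhs n x = ?rhs n x" if x: "x \<in> simp (sdn (r + s) (lift (sprod K1 K1'))) n" for n x
  proof -
    have "sdmapn (r + s) (lift (sprod K K')) (liftmap (prod_map f f')) n x \<in> simp (sdn (r + s) (lift (sprod K K'))) n"
      by (rule smapD_simp[OF smap_sdmapn[OF lP1 F] x])
    moreover note pullback_gam_natural[OF lP lP1 lK(1) lK1(1) F smap_liftmap[OF f]
        smap_liftmap[OF smap_fst] smap_liftmap[OF smap_fst] _ refl x]
      pullback_gam_natural[OF lP lP1 lK(2) lK1(2) F smap_liftmap[OF f']
        smap_liftmap[OF smap_snd] smap_liftmap[OF smap_snd] _ add.commute x]
    ultimately show ?thesis
      unfolding mu_def Let_def zmul_def pullback_def[of "sdn (r + s) (lift (sprod K1 K1'))"]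
      using x by (simp add: liftmap_def prod_map_def)
  qed
  moreover have "?lhs n x = ?rhs n x" if "x \<notin> simp (sdn (r + s) (lift (sprod K1 K1'))) n" for n x
    using that unfolding mu_def Let_def zmul_def pullback_def by simp
  ultimately show ?thesis by blast
qed

theorem lemma3p1:
  fixes K :: "'a sset" and L :: "nat \<Rightarrow> 'a set"
    and K' :: "'b sset" and L' :: "nat \<Rightarrow> 'b set"
    and r s :: nat
  assumes "finite_sset K" "subsset L K" "finite_sset K'" "subsset L' K'"
  shows "(\<forall>a \<in> zrel r K L. \<forall>b \<in> zrel s K' L'.
            mu r s K K' a b \<in> zrel (r + s) (sprod K K') (pair_union K L K' L'))
       \<and> (\<forall>(K1 :: 'c sset) (L1 :: nat \<Rightarrow> 'c set) (K1' :: 'd sset) (L1' :: nat \<Rightarrow> 'd set) f f'.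
            finite_sset K1 \<longrightarrow> subsset L1 K1 \<longrightarrow> finite_sset K1' \<longrightarrow> subsset L1' K1' \<longrightarrow>
            smap K1 K f \<longrightarrow> (\<forall>n. f n ` L1 n \<subseteq> L n) \<longrightarrow>
            smap K1' K' f' \<longrightarrow> (\<forall>n. f' n ` L1' n \<subseteq> L' n) \<longrightarrow>
            (\<forall>a \<in> zrel r K L. \<forall>b \<in> zrel s K' L'.
               mu r s K1 K1'
                  (pullback (sdn r (lift K1)) (sdmapn r (lift K) (liftmap f)) a)
                  (pullback (sdn s (lift K1')) (sdmapn s (lift K') (liftmap f')) b)
               = pullback (sdn (r + s) (lift (sprod K1 K1')))
                   (sdmapn (r + s) (lift (sprod K K')) (liftmap (prod_map f f')))
                   (mu r s K K' a b)))"
proof -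
  have K: "is_sset K" "is_sset K'" using assms(1,3) unfolding finite_sset_def by blast+
  txt \<open>Naturality holds for all maps f, f'.\<close>
  show ?thesis
    by (intro conjI ballI allI impI mu_in_zrel[OF K assms(2,4)] mu_natural[OF K])
      (simp_all add: finite_sset_def)
qed

end
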